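(* Let $\Gamma$ be a connected $\mathbb Z$-leg-weighted graph with edge set $E$, and let $F_\Gamma$ be the set of all faces of the cones $c_w$ as $w$ runs over $W(\Gamma)$. Then $F_\Gamma$ is a finite fan in $\mathbb Q_{\ge0}^E$.
   Context: A graph consists of finite sets $V$ (vertices) and $H$ (half-edges), a map $\mathrm{end}\colon H\to V$, an involution $i$ of $H$, a genus $g\colon V\to\mathbb Z_{\ge0}$ and an integer twist $k$. Legs are fixed points of $i$; edges are pairs $\{h,i(h)\}$ with $h\ne i(h)$; a directed edge is a non-leg half-edge $h$ from $\mathrm{end}(h)$ to $\mathrm{end}(i(h))$. $\mathrm{val}(v)$ counts non-leg half-edges at $v$, $\kappa(v)=2g(v)-2+\mathrm{val}(v)$, $g(\Gamma)=b_1(\Gamma)+\sum_v g(v)$. A cycle is a closed walk of directed edges repeating no vertex or undirected edge. A weighting is $w\colon H\to\mathbb Z$ with $w(h)+w(i(h))=0$ for $h\ne i(h)$ and $\sum_{\mathrm{end}(h)=v}w(h)+k\kappa(v)=0$ for all $v$; $W(\Gamma)$ is the set of weightings with prescribed integer leg values (summing to $-k(2g(\Gamma)-2)$). For a directed edge $e$ of a cycle $\gamma$, $w_\gamma(e)$ is the value of $w$ at the source half-edge of $e$. $c_w\subseteq\mathbb Q_{\ge0}^E$ is the cone of $t$ with $\sum_{e\in\gamma}w_\gamma(e)t(e)=0$ for all cycles $\gamma$. *)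

theory Defs
  imports Complex_Main
begin

text \<open>A graph: vertex set V, half-edge set H, map endp : H -> V, involution iv of H,
  genus gen : V -> nat.  Types 'v of vertices and 'h of half-edges.\<close>

definition is_graph :: "'v set \<Rightarrow> 'h set \<Rightarrow> ('h \<Rightarrow> 'v) \<Rightarrow> ('h \<Rightarrow> 'h) \<Rightarrow> bool" where
  "is_graph V H endp iv \<longleftrightarrow> finite V \<and> finite H \<and> endp ` H \<subseteq> V \<and> iv ` H \<subseteq> H
     \<and> (\<forall>h\<in>H. iv (iv h) = h)"

definition is_leg :: "('h \<Rightarrow> 'h) \<Rightarrow> 'h \<Rightarrow> bool" where
  "is_leg iv h \<longleftrightarrow> iv h = h"

definition edges :: "'h set \<Rightarrow> ('h \<Rightarrow> 'h) \<Rightarrow> 'h set set" where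
  "edges H iv = {{h, iv h} | h. h \<in> H \<and> iv h \<noteq> h}"

definition val :: "'h set \<Rightarrow> ('h \<Rightarrow> 'v) \<Rightarrow> ('h \<Rightarrow> 'h) \<Rightarrow> 'v \<Rightarrow> nat" where
  "val H endp iv v = card {h \<in> H. endp h = v \<and> iv h \<noteq> h}"

definition kappa :: "'h set \<Rightarrow> ('h \<Rightarrow> 'v) \<Rightarrow> ('h \<Rightarrow> 'h) \<Rightarrow> ('v \<Rightarrow> nat) \<Rightarrow> 'v \<Rightarrow> int" where
  "kappa H endp iv gen v = 2 * int (gen v) - 2 + int (val H endp iv v)"

definition connected_graph :: "'v set \<Rightarrow> 'h set \<Rightarrow> ('h \<Rightarrow> 'v) \<Rightarrow> ('h \<Rightarrow> 'h) \<Rightarrow> bool" where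
  "connected_graph V H endp iv \<longleftrightarrow> V \<noteq> {} \<and>
     (\<forall>u\<in>V. \<forall>v\<in>V. (u, v) \<in> {(endp h, endp (iv h)) | h. h \<in> H \<and> iv h \<noteq> h}\<^sup>*)"

text \<open>Genus of a connected graph: b_1 + sum of vertex genera, with b_1 = |E| - |V| + 1.\<close>
definition graph_genus :: "'v set \<Rightarrow> 'h set \<Rightarrow> ('h \<Rightarrow> 'h) \<Rightarrow> ('v \<Rightarrow> nat) \<Rightarrow> int" where
  "graph_genus V H iv gen =
     int (card (edges H iv)) - int (card V) + 1 + (\<Sum>v\<in>V. int (gen v))"

text \<open>Cycles: closed walks of directed edges h_0, ..., h_{n-1} (non-leg half-edges, each
  directed from endp h_j to endp (iv h_j)), repeating no vertex and no undirected edge.\<close>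
definition is_cycle :: "'h set \<Rightarrow> ('h \<Rightarrow> 'v) \<Rightarrow> ('h \<Rightarrow> 'h) \<Rightarrow> 'h list \<Rightarrow> bool" where
  "is_cycle H endp iv c \<longleftrightarrow> c \<noteq> [] \<and> set c \<subseteq> H \<and> (\<forall>h\<in>set c. iv h \<noteq> h)
     \<and> (\<forall>j<length c. endp (iv (c ! j)) = endp (c ! ((j + 1) mod length c)))
     \<and> distinct (map endp c) \<and> distinct (map (\<lambda>h. {h, iv h}) c)"

definition is_weighting :: "'v set \<Rightarrow> 'h set \<Rightarrow> ('h \<Rightarrow> 'v) \<Rightarrow> ('h \<Rightarrow> 'h) \<Rightarrow> ('v \<Rightarrow> nat)
     \<Rightarrow> int \<Rightarrow> ('h \<Rightarrow> int) \<Rightarrow> bool" where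
  "is_weighting V H endp iv gen k w \<longleftrightarrow>
     (\<forall>h\<in>H. iv h \<noteq> h \<longrightarrow> w h + w (iv h) = 0)
     \<and> (\<forall>v\<in>V. (\<Sum>h\<in>{h\<in>H. endp h = v}. w h) + k * kappa H endp iv gen v = 0)"

definition weightings :: "'v set \<Rightarrow> 'h set \<Rightarrow> ('h \<Rightarrow> 'v) \<Rightarrow> ('h \<Rightarrow> 'h) \<Rightarrow> ('v \<Rightarrow> nat)
     \<Rightarrow> int \<Rightarrow> ('h \<Rightarrow> int) \<Rightarrow> ('h \<Rightarrow> int) set" where
  "weightings V H endp iv gen k lw =
     {w. is_weighting V H endp iv gen k w \<and> (\<forall>h\<in>H. iv h = h \<longrightarrow> w h = lw h)
         \<and> (\<forall>h. h \<notin> H \<longrightarrow> w h = 0)}"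

definition QE :: "'e set \<Rightarrow> ('e \<Rightarrow> rat) set" where
  "QE E = {t. \<forall>e. e \<notin> E \<longrightarrow> t e = 0}"

definition QE_nonneg :: "'e set \<Rightarrow> ('e \<Rightarrow> rat) set" where
  "QE_nonneg E = {t \<in> QE E. \<forall>e\<in>E. t e \<ge> 0}"

definition pairing :: "'e set \<Rightarrow> ('e \<Rightarrow> rat) \<Rightarrow> ('e \<Rightarrow> rat) \<Rightarrow> rat" where
  "pairing E u t = (\<Sum>e\<in>E. u e * t e)"

definition cone_w :: "'h set \<Rightarrow> ('h \<Rightarrow> 'v) \<Rightarrow> ('h \<Rightarrow> 'h) \<Rightarrow> ('h \<Rightarrow> int) \<Rightarrow> ('h set \<Rightarrow> rat) set" where
  "cone_w H endp iv w =
     {t \<in> QE_nonneg (edges H iv). \<forall>c. is_cycle H endp iv c \<longrightarrow>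
        (\<Sum>j<length c. of_int (w (c ! j)) * t {c ! j, iv (c ! j)}) = 0}"

definition polyhedral_cone :: "'e set \<Rightarrow> ('e \<Rightarrow> rat) set \<Rightarrow> bool" where
  "polyhedral_cone E C \<longleftrightarrow> (\<exists>U. finite U \<and> C = {t \<in> QE E. \<forall>u\<in>U. pairing E u t \<ge> 0})"

text \<open>Faces of a cone: intersections with supporting hyperplanes (u = 0 gives C itself).\<close>
definition face_of_cone :: "'e set \<Rightarrow> ('e \<Rightarrow> rat) set \<Rightarrow> ('e \<Rightarrow> rat) set \<Rightarrow> bool" where
  "face_of_cone E C F \<longleftrightarrow> (\<exists>u. (\<forall>t\<in>C. pairing E u t \<ge> 0) \<and> F = {t \<in> C. pairing E u t = 0})"

definition finite_fan :: "'e set \<Rightarrow> ('e \<Rightarrow> rat) set set \<Rightarrow> bool" where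
  "finite_fan E \<F> \<longleftrightarrow> finite \<F>
     \<and> (\<forall>C\<in>\<F>. polyhedral_cone E C \<and> C \<subseteq> QE_nonneg E)
     \<and> (\<forall>C\<in>\<F>. \<forall>F. face_of_cone E C F \<longrightarrow> F \<in> \<F>)
     \<and> (\<forall>C1\<in>\<F>. \<forall>C2\<in>\<F>. face_of_cone E C1 (C1 \<inter> C2) \<and> face_of_cone E C2 (C1 \<inter> C2))"

end

theory Submission imports Defs begin

(* If t lies in c_w and c_w' and d = w - w' were positive on an edge h0 in the support of t,
   let R be the set of vertices reachable from the head of h0 along half-edges with d > 0.
   The tail of h0 is not in R: otherwise those half-edges and h0 close a cycle on which
   every term of the cycle sum of d against t is non-negative and the term of h0 is
   positive. So every half-edge leaving R has d \<le> 0, and summing the vertex conditions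
   over R gives d h0 \<le> 0. The same cut argument applied to w itself bounds |w| on the
   support of t by a constant of the graph, so only finitely many cones c_w intersected
   with coordinate subspaces occur. Each c_w is the intersection of the non-negative
   orthant with a linear subspace; its faces are its coordinate faces, and c_w and c_w'
   meet in the coordinate face where the edges with w \<noteq> w' vanish. *)

section \<open>Walks and cycles\<close>

fun walk :: "('h \<Rightarrow> 'v) \<Rightarrow> ('h \<Rightarrow> 'h) \<Rightarrow> 'h list \<Rightarrow> 'v \<Rightarrow> 'v \<Rightarrow> bool" where
  "walk endp iv [] a b = (a = b)"
| "walk endp iv (h # p) a b = (endp h = a \<and> walk endp iv p (endp (iv h)) b)"

lemma walk_snoc: "walk endp iv p a b \<Longrightarrow> endp h = b \<Longrightarrow> walk endp iv (p @ [h]) a (endp (iv h))"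
  by (induction p arbitrary: a) auto

lemma rtrancl_imp_walk:
  assumes "(a, b) \<in> {(endp h, endp (iv h)) | h. h \<in> S}\<^sup>*"
  shows "\<exists>p. set p \<subseteq> S \<and> walk endp iv p a b"
  using assms
proof (induction rule: rtrancl_induct)
  case base
  show ?case by (rule exI[of _ "[]"]) simp
next
  case (step y z)
  then obtain p h where "set p \<subseteq> S" "walk endp iv p a y" "h \<in> S" "y = endp h" "z = endp (iv h)"
    by blast
  then show ?case by (intro exI[of _ "p @ [h]"]) (simp add: walk_snoc)
qed

lemma walk_drop:
  "walk endp iv q a b \<Longrightarrow> i < length q \<Longrightarrow> walk endp iv (drop i q) (endp (q ! i)) b"
  by (induction q arbitrary: a i) (auto simp: nth_Cons split: nat.split)

lemma walk_imp_simple_walk: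
  "walk endp iv p a b \<Longrightarrow>
     \<exists>q. set q \<subseteq> set p \<and> walk endp iv q a b \<and> distinct (map endp q) \<and> b \<notin> endp ` set q"
proof (induction p arbitrary: a)
  case Nil
  then show ?case by (intro exI[of _ "[]"]) simp
next
  case (Cons h p)
  then have ha: "endp h = a" and w: "walk endp iv p (endp (iv h)) b" by auto
  from Cons.IH[OF w] obtain q where q: "set q \<subseteq> set p" "walk endp iv q (endp (iv h)) b"
    "distinct (map endp q)" "b \<notin> endp ` set q" by blast
  consider "a = b" | "a \<noteq> b" "a \<in> endp ` set q" | "a \<noteq> b" "a \<notin> endp ` set q" by blast
  then show ?case
  proof cases
    case 1
    then show ?thesis by (intro exI[of _ "[]"]) simp
  next
    case 2
    then obtain i where i: "i < length q" "endp (q ! i) = a" by (auto simp: in_set_conv_nth)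
    have "walk endp iv (drop i q) a b" using walk_drop[OF q(2) i(1)] i(2) by simp
    moreover have "distinct (map endp (drop i q))" using q(3) by (simp add: drop_map[symmetric])
    moreover have "set (drop i q) \<subseteq> set q" by (rule set_drop_subset)
    ultimately show ?thesis using q(1,4) by (intro exI[of _ "drop i q"]) auto
  next
    case 3
    then show ?thesis using q ha by (intro exI[of _ "h # q"]) auto
  qed
qed

lemma walk_nth_connects:
  "walk endp iv p a b \<Longrightarrow> endp x = b \<Longrightarrow> j < length p \<Longrightarrow>
     endp (iv (p ! j)) = endp ((p @ [x]) ! (j + 1))"
proof (induction p arbitrary: a j)
  case Nil
  then show ?case by simp
next
  case (Cons h p)
  then show ?case by (cases j; cases p) (auto simp: nth_append)
qed

lemma is_cycle_Cons_simple_walk: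
  assumes anti: "\<forall>h\<in>H. iv h \<noteq> h \<longrightarrow> d (iv h) = - d h"
    and h0: "h0 \<in> H" "iv h0 \<noteq> h0" "(d h0::int) > 0"
    and qS: "set q \<subseteq> {h\<in>H. iv h \<noteq> h \<and> d h > 0}"
    and qw: "walk endp iv q (endp (iv h0)) (endp h0)"
    and qd: "distinct (map endp q)" and qn: "endp h0 \<notin> endp ` set q"
  shows "is_cycle H endp iv (h0 # q)"
proof -
  let ?c = "h0 # q"
  have cS: "set ?c \<subseteq> {h\<in>H. iv h \<noteq> h \<and> d h > 0}" using qS h0 by auto
  have cw: "walk endp iv ?c (endp h0) (endp h0)" using qw by simp
  have conn: "endp (iv (?c ! j)) = endp (?c ! ((j + 1) mod length ?c))" if j: "j < length ?c" for j
  proof -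
    have "(?c @ [?c ! 0]) ! (j + 1) = ?c ! ((j + 1) mod length ?c)"
    proof (cases "j + 1 < length ?c")
      case False
      then have "j + 1 = length ?c" using j by simp
      then show ?thesis by (simp add: nth_append)
    qed (simp add: nth_append)
    then show ?thesis using walk_nth_connects[OF cw _ j, of "?c ! 0"] by simp
  qed
  have dm: "distinct (map endp ?c)" using qd qn by simp
  then have dc: "distinct ?c" using distinct_map by blast
  \<comment> \<open>An edge and its reverse cannot both carry positive d, so the undirected edges are distinct.\<close>
  have "inj_on (\<lambda>h. {h, iv h}) (set ?c)"
  proof (rule inj_onI)
    fix a b assume a: "a \<in> set ?c" and b: "b \<in> set ?c" and e: "{a, iv a} = {b, iv b}"
    show "a = b"
    proof (rule ccontr)
      assume "a \<noteq> b"
      then have "a = iv b" using e by (auto simp: doubleton_eq_iff)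
      moreover have "b \<in> H" "iv b \<noteq> b" "d b > 0" "d a > 0" using a b cS by auto
      ultimately show False using anti by auto
    qed
  qed
  then have "distinct (map (\<lambda>h. {h, iv h}) ?c)" using dc by (simp add: distinct_map)
  then show ?thesis unfolding is_cycle_def using cS conn dm by auto
qed

section \<open>The cut argument\<close>

definition cycle_sum :: "('h \<Rightarrow> 'h) \<Rightarrow> ('h \<Rightarrow> int) \<Rightarrow> ('h set \<Rightarrow> rat) \<Rightarrow> 'h list \<Rightarrow> rat" where
  "cycle_sum iv w t c = (\<Sum>j<length c. of_int (w (c ! j)) * t {c ! j, iv (c ! j)})"

lemma cycle_sum_diff:
  "cycle_sum iv (\<lambda>h. w h - w' h) t c = cycle_sum iv w t c - cycle_sum iv w' t c"
  unfolding cycle_sum_def by (simp add: sum_subtractf[symmetric] left_diff_distrib)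

lemma mem_cone_w_iff:
  "t \<in> cone_w H endp iv w \<longleftrightarrow>
     t \<in> QE_nonneg (edges H iv) \<and> (\<forall>c. is_cycle H endp iv c \<longrightarrow> cycle_sum iv w t c = 0)"
  unfolding cone_w_def cycle_sum_def by blast

lemma edge_in_edges: "h \<in> H \<Longrightarrow> iv h \<noteq> h \<Longrightarrow> {h, iv h} \<in> edges H iv"
  unfolding edges_def by blast

lemma finite_edges: "is_graph V H endp iv \<Longrightarrow> finite (edges H iv)"
proof -
  assume "is_graph V H endp iv"
  then have "finite ((\<lambda>h. {h, iv h}) ` H)" unfolding is_graph_def by blast
  moreover have "edges H iv \<subseteq> (\<lambda>h. {h, iv h}) ` H" unfolding edges_def by blast
  ultimately show ?thesis using finite_subset by blast
qed

lemma closed_set_of_positive_edge: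
  assumes g: "is_graph V H endp iv"
    and t: "t \<in> QE_nonneg (edges H iv)"
    and cyc: "\<forall>c. is_cycle H endp iv c \<longrightarrow> cycle_sum iv d t c = 0"
    and anti: "\<forall>h\<in>H. iv h \<noteq> h \<longrightarrow> d (iv h) = - d h"
    and h0: "h0 \<in> H" "iv h0 \<noteq> h0" "(d h0::int) > 0" "t {h0, iv h0} > 0"
  shows "\<exists>R \<subseteq> V. endp (iv h0) \<in> R \<and> endp h0 \<notin> R \<and>
           (\<forall>h\<in>H. endp h \<in> R \<longrightarrow> iv h \<noteq> h \<longrightarrow> endp (iv h) \<notin> R \<longrightarrow> d h \<le> 0)"
proof -
  define S where "S = {h\<in>H. iv h \<noteq> h \<and> d h > 0}"
  define A where "A = {(endp h, endp (iv h)) | h. h \<in> S}"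
  define R where "R = A\<^sup>* `` {endp (iv h0)}"
  have gH: "endp ` H \<subseteq> V" "iv ` H \<subseteq> H" using g unfolding is_graph_def by auto
  have "R \<subseteq> V"
  proof
    fix x assume "x \<in> R"
    then have "(endp (iv h0), x) \<in> A\<^sup>*" unfolding R_def by simp
    then show "x \<in> V"
      by (induction rule: rtrancl_induct) (use gH h0 in \<open>auto simp: A_def S_def\<close>)
  qed
  moreover have "\<forall>h\<in>H. endp h \<in> R \<longrightarrow> iv h \<noteq> h \<longrightarrow> endp (iv h) \<notin> R \<longrightarrow> d h \<le> 0"
  proof (intro ballI impI)
    fix h assume h: "h \<in> H" "endp h \<in> R" "iv h \<noteq> h" "endp (iv h) \<notin> R"
    show "d h \<le> 0"
    proof (rule ccontr)
      assume "\<not> d h \<le> 0"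
      then have "(endp h, endp (iv h)) \<in> A" using h unfolding A_def S_def by auto
      then show False using h(2,4) unfolding R_def by (meson ImageE ImageI rtrancl_into_rtrancl)
    qed
  qed
  moreover have "endp h0 \<notin> R"
  proof
    assume "endp h0 \<in> R"
    then have "(endp (iv h0), endp h0) \<in> {(endp h, endp (iv h)) | h. h \<in> S}\<^sup>*"
      unfolding R_def A_def by simp
    from rtrancl_imp_walk[OF this] obtain p
      where p: "set p \<subseteq> S" "walk endp iv p (endp (iv h0)) (endp h0)" by blast
    obtain q where q: "set q \<subseteq> S" "walk endp iv q (endp (iv h0)) (endp h0)"
      "distinct (map endp q)" "endp h0 \<notin> endp ` set q"
      using walk_imp_simple_walk[OF p(2)] p(1) by blast
    let ?c = "h0 # q"
    have "is_cycle H endp iv ?c"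
      using is_cycle_Cons_simple_walk[OF anti h0(1-3) _ q(2-4)] q(1) unfolding S_def .
    then have sum0: "cycle_sum iv d t ?c = 0" using cyc by blast
    have "0 \<le> of_int (d (?c ! j)) * t {?c ! j, iv (?c ! j)}" if "j < length ?c" for j
    proof -
      have "?c ! j \<in> S" using nth_mem[OF that] q(1) h0 unfolding S_def by auto
      then have "d (?c ! j) > 0" "{?c ! j, iv (?c ! j)} \<in> edges H iv"
        unfolding S_def by (auto intro: edge_in_edges)
      then show ?thesis using t unfolding QE_nonneg_def by auto
    qed
    moreover have "0 < of_int (d (?c ! 0)) * t {?c ! 0, iv (?c ! 0)}" using h0 by simp
    ultimately have "0 < cycle_sum iv d t ?c"
      unfolding cycle_sum_def by (intro sum_pos2[of _ 0]) auto
    then show False using sum0 by simp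
  qed
  moreover have "endp (iv h0) \<in> R" unfolding R_def by simp
  ultimately show ?thesis by blast
qed

lemma cut_sum_le:
  assumes g: "is_graph V H endp iv"
    and anti: "\<forall>h\<in>H. iv h \<noteq> h \<longrightarrow> d (iv h) = - d h"
    and h0: "h0 \<in> H" "iv h0 \<noteq> h0"
    and R: "endp (iv h0) \<in> R" "endp h0 \<notin> R"
    and out: "\<forall>h\<in>H. endp h \<in> R \<longrightarrow> iv h \<noteq> h \<longrightarrow> endp (iv h) \<notin> R \<longrightarrow> (d h::int) \<le> 0"
  shows "(\<Sum>h\<in>{h\<in>H. endp h \<in> R}. d h) \<le> (\<Sum>h\<in>{h\<in>H. endp h \<in> R \<and> iv h = h}. d h) - d h0"
proof -
  have gH: "iv ` H \<subseteq> H" "\<forall>h\<in>H. iv (iv h) = h" "finite H"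
    using g unfolding is_graph_def by auto
  define L where "L = {h\<in>H. endp h \<in> R \<and> iv h = h}"
  define I where "I = {h\<in>H. endp h \<in> R \<and> iv h \<noteq> h \<and> endp (iv h) \<in> R}"
  define C where "C = {h\<in>H. endp h \<in> R \<and> iv h \<noteq> h \<and> endp (iv h) \<notin> R}"
  have fin: "finite L" "finite I" "finite C" unfolding L_def I_def C_def using gH by auto
  have "{h\<in>H. endp h \<in> R} = L \<union> (I \<union> C)" "L \<inter> (I \<union> C) = {}" "I \<inter> C = {}"
    unfolding L_def I_def C_def by auto
  then have split: "(\<Sum>h\<in>{h\<in>H. endp h \<in> R}. d h) = sum d L + (sum d I + sum d C)"
    using fin by (simp add: sum.union_disjoint)
  \<comment> \<open>Internal edges cancel in pairs.\<close>
  have "sum d I = (\<Sum>h\<in>I. d (iv h))"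
    by (rule sum.reindex_bij_witness[of _ iv iv]) (use gH in \<open>auto simp: I_def\<close>)
  also have "\<dots> = - sum d I" using anti by (simp add: I_def sum_negf)
  finally have "sum d I = 0" by simp
  moreover have "iv h0 \<in> C" unfolding C_def using h0 R gH by auto
  then have "sum d C = d (iv h0) + sum d (C - {iv h0})" using fin(3) by (simp add: sum.remove)
  moreover have "sum d (C - {iv h0}) \<le> 0" by (rule sum_nonpos) (use out in \<open>auto simp: C_def\<close>)
  moreover have "d (iv h0) = - d h0" using anti h0 by auto
  ultimately show ?thesis using split unfolding L_def by simp
qed

lemma sum_half_edges_over_vertices:
  fixes endp :: "'h \<Rightarrow> 'v" and d :: "'h \<Rightarrow> 'a::comm_monoid_add"
  assumes "finite H" "finite R"
  shows "(\<Sum>h\<in>{h\<in>H. endp h \<in> R}. d h) = (\<Sum>v\<in>R. \<Sum>h\<in>{h\<in>H. endp h = v}. d h)"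
proof -
  have "(\<Sum>h\<in>{h\<in>H. endp h \<in> R}. d h) = (\<Sum>v\<in>R. \<Sum>h\<in>{x \<in> {h\<in>H. endp h \<in> R}. endp x = v}. d h)"
    by (rule sum.group[symmetric]) (use assms in auto)
  also have "\<dots> = (\<Sum>v\<in>R. \<Sum>h\<in>{h\<in>H. endp h = v}. d h)" by (intro sum.cong refl) auto
  finally show ?thesis .
qed

lemma abs_flow_le_on_support:
  fixes d :: "'h \<Rightarrow> int"
  assumes g: "is_graph V H endp iv"
    and t: "t \<in> QE_nonneg (edges H iv)"
    and cyc: "\<forall>c. is_cycle H endp iv c \<longrightarrow> cycle_sum iv d t c = 0"
    and anti: "\<forall>h\<in>H. iv h \<noteq> h \<longrightarrow> d (iv h) = - d h"
    and bound: "\<And>R. R \<subseteq> V \<Longrightarrow>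
      (\<Sum>h\<in>{h\<in>H. endp h \<in> R \<and> iv h = h}. d h) - (\<Sum>v\<in>R. \<Sum>h\<in>{h\<in>H. endp h = v}. d h) \<le> B"
    and h: "h \<in> H" "iv h \<noteq> h" "t {h, iv h} > 0"
  shows "\<bar>d h\<bar> \<le> B"
proof -
  have gH: "iv ` H \<subseteq> H" "\<forall>h\<in>H. iv (iv h) = h" "finite H" "finite V"
    using g unfolding is_graph_def by auto
  have B0: "0 \<le> B" using bound[of "{}"] by simp
  have le: "d h' \<le> B" if h': "h' \<in> H" "iv h' \<noteq> h'" "t {h', iv h'} > 0" for h'
  proof (cases "d h' > 0")
    case True
    obtain R where R: "R \<subseteq> V" "endp (iv h') \<in> R" "endp h' \<notin> R"
      "\<forall>h\<in>H. endp h \<in> R \<longrightarrow> iv h \<noteq> h \<longrightarrow> endp (iv h) \<notin> R \<longrightarrow> d h \<le> 0"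
      using closed_set_of_positive_edge[OF g t cyc anti h'(1,2) True h'(3)] by blast
    have "finite R" using R(1) gH(4) finite_subset by blast
    then show ?thesis
      using cut_sum_le[OF g anti h'(1,2) R(2-4)] bound[OF R(1)]
        sum_half_edges_over_vertices[where endp = endp and d = d, OF gH(3) \<open>finite R\<close>] by linarith
  next
    case False
    then show ?thesis using B0 by linarith
  qed
  have "iv h \<in> H" "iv (iv h) \<noteq> iv h" "t {iv h, iv (iv h)} > 0"
    using gH h by (auto simp: insert_commute)
  then show ?thesis using le[OF h] le anti h by fastforce
qed

lemma weightingsD:
  assumes "w \<in> weightings V H endp iv gen k lw"
  shows "\<forall>h\<in>H. iv h \<noteq> h \<longrightarrow> w (iv h) = - w h"
    and "\<forall>v\<in>V. (\<Sum>h\<in>{h\<in>H. endp h = v}. w h) = - (k * kappa H endp iv gen v)"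
    and "\<forall>h\<in>H. iv h = h \<longrightarrow> w h = lw h"
  using assms unfolding weightings_def is_weighting_def
  by (auto simp: algebra_simps eq_neg_iff_add_eq_0)

lemma weightings_agree_on_support:
  assumes g: "is_graph V H endp iv"
    and w: "w \<in> weightings V H endp iv gen k lw" and w': "w' \<in> weightings V H endp iv gen k lw"
    and t: "t \<in> cone_w H endp iv w" "t \<in> cone_w H endp iv w'"
    and h: "h \<in> H" "iv h \<noteq> h" "t {h, iv h} > 0"
  shows "w h = w' h"
proof -
  define d where "d = (\<lambda>h. w h - w' h)"
  note wf = weightingsD[OF w] and wf' = weightingsD[OF w']
  have "\<bar>d h\<bar> \<le> 0"
  proof (rule abs_flow_le_on_support[where d = d and iv = iv and t = t, OF g _ _ _ _ h])
    show "t \<in> QE_nonneg (edges H iv)" using t(1) by (simp add: mem_cone_w_iff)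
    show "\<forall>c. is_cycle H endp iv c \<longrightarrow> cycle_sum iv d t c = 0"
      using t unfolding d_def mem_cone_w_iff cycle_sum_diff by simp
    show "\<forall>h\<in>H. iv h \<noteq> h \<longrightarrow> d (iv h) = - d h" using wf(1) wf'(1) unfolding d_def by auto
    fix R assume "R \<subseteq> V"
    then have "(\<Sum>v\<in>R. \<Sum>h\<in>{h\<in>H. endp h = v}. d h) = 0"
      using wf(2) wf'(2) unfolding d_def by (intro sum.neutral) (auto simp: sum_subtractf)
    moreover have "(\<Sum>h\<in>{h\<in>H. endp h \<in> R \<and> iv h = h}. d h) = 0"
      using wf(3) wf'(3) unfolding d_def by (intro sum.neutral) auto
    ultimately show "(\<Sum>h\<in>{h\<in>H. endp h \<in> R \<and> iv h = h}. d h)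
        - (\<Sum>v\<in>R. \<Sum>h\<in>{h\<in>H. endp h = v}. d h) \<le> 0" by simp
  qed
  then show ?thesis unfolding d_def by simp
qed

definition weight_bound :: "'v set \<Rightarrow> 'h set \<Rightarrow> ('h \<Rightarrow> 'v) \<Rightarrow> ('h \<Rightarrow> 'h) \<Rightarrow> ('v \<Rightarrow> nat)
     \<Rightarrow> int \<Rightarrow> ('h \<Rightarrow> int) \<Rightarrow> int" where
  "weight_bound V H endp iv gen k lw =
     (\<Sum>h\<in>{h\<in>H. iv h = h}. \<bar>lw h\<bar>) + (\<Sum>v\<in>V. \<bar>k * kappa H endp iv gen v\<bar>)"

lemma weight_bound_nonneg: "0 \<le> weight_bound V H endp iv gen k lw"
  unfolding weight_bound_def by (intro add_nonneg_nonneg sum_nonneg) auto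

lemma weighting_bounded_on_support:
  assumes g: "is_graph V H endp iv"
    and w: "w \<in> weightings V H endp iv gen k lw"
    and t: "t \<in> cone_w H endp iv w"
    and h: "h \<in> H" "iv h \<noteq> h" "t {h, iv h} > 0"
  shows "\<bar>w h\<bar> \<le> weight_bound V H endp iv gen k lw"
proof (rule abs_flow_le_on_support[where d = w and iv = iv and t = t, OF g _ _ _ _ h])
  note wf = weightingsD[OF w]
  have fin: "finite H" "finite V" using g unfolding is_graph_def by auto
  show "t \<in> QE_nonneg (edges H iv)" "\<forall>c. is_cycle H endp iv c \<longrightarrow> cycle_sum iv w t c = 0"
    using t by (simp_all add: mem_cone_w_iff)
  show "\<forall>h\<in>H. iv h \<noteq> h \<longrightarrow> w (iv h) = - w h" by (rule wf(1))
  fix R assume R: "R \<subseteq> V"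
  have "(\<Sum>h\<in>{h\<in>H. endp h \<in> R \<and> iv h = h}. w h) \<le> (\<Sum>h\<in>{h\<in>H. endp h \<in> R \<and> iv h = h}. \<bar>lw h\<bar>)"
    using wf(3) by (intro sum_mono) auto
  also have "\<dots> \<le> (\<Sum>h\<in>{h\<in>H. iv h = h}. \<bar>lw h\<bar>)" by (rule sum_mono2) (use fin in auto)
  finally have legs: "(\<Sum>h\<in>{h\<in>H. endp h \<in> R \<and> iv h = h}. w h) \<le> (\<Sum>h\<in>{h\<in>H. iv h = h}. \<bar>lw h\<bar>)" .
  have "- (\<Sum>v\<in>R. \<Sum>h\<in>{h\<in>H. endp h = v}. w h) = (\<Sum>v\<in>R. k * kappa H endp iv gen v)"
    using wf(2) R by (simp add: sum_negf[symmetric] subset_iff)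
  also have "\<dots> \<le> (\<Sum>v\<in>R. \<bar>k * kappa H endp iv gen v\<bar>)" by (intro sum_mono) auto
  also have "\<dots> \<le> (\<Sum>v\<in>V. \<bar>k * kappa H endp iv gen v\<bar>)" by (rule sum_mono2) (use R fin in auto)
  finally show "(\<Sum>h\<in>{h\<in>H. endp h \<in> R \<and> iv h = h}. w h) - (\<Sum>v\<in>R. \<Sum>h\<in>{h\<in>H. endp h = v}. w h)
      \<le> weight_bound V H endp iv gen k lw"
    using legs unfolding weight_bound_def by linarith
qed

section \<open>Orthant slices and coordinate faces\<close>

definition vanishing_on :: "'e set \<Rightarrow> ('e \<Rightarrow> rat) set" where
  "vanishing_on T = {t. \<forall>e\<in>T. t e = 0}"

(* The intersection of Q_{>=0}^E with a linear subspace, phrased without the subspace. *)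
definition orthant_slice :: "'e set \<Rightarrow> ('e \<Rightarrow> rat) set \<Rightarrow> bool" where
  "orthant_slice E C \<longleftrightarrow> (\<lambda>e. 0) \<in> C \<and> C \<subseteq> QE_nonneg E \<and>
     (\<forall>a\<in>C. \<forall>b\<in>C. \<forall>x y. (\<lambda>e. x * a e + y * b e) \<in> QE_nonneg E \<longrightarrow> (\<lambda>e. x * a e + y * b e) \<in> C)"

lemma pairing_lin: "pairing E u (\<lambda>e. x * a e + y * b e) = x * pairing E u a + y * pairing E u b"
  unfolding pairing_def by (simp add: sum.distrib sum_distrib_left algebra_simps)

lemma orthant_slice_add:
  assumes "orthant_slice E C" "a \<in> C" "b \<in> C"
  shows "(\<lambda>e. a e + b e) \<in> C"
proof -
  have "a \<in> QE_nonneg E" "b \<in> QE_nonneg E" using assms unfolding orthant_slice_def by auto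
  then have "(\<lambda>e. 1 * a e + 1 * b e) \<in> QE_nonneg E" unfolding QE_nonneg_def QE_def by auto
  then show ?thesis using assms unfolding orthant_slice_def by fastforce
qed

lemma orthant_slice_cone_w: "orthant_slice (edges H iv) (cone_w H endp iv w)"
  unfolding orthant_slice_def
proof (intro conjI ballI allI impI)
  show "(\<lambda>e. 0) \<in> cone_w H endp iv w"
    by (simp add: mem_cone_w_iff QE_nonneg_def QE_def cycle_sum_def)
  show "cone_w H endp iv w \<subseteq> QE_nonneg (edges H iv)" by (auto simp: mem_cone_w_iff)
  fix a b x y
  assume "a \<in> cone_w H endp iv w" "b \<in> cone_w H endp iv w"
    and "(\<lambda>e. x * a e + y * b e) \<in> QE_nonneg (edges H iv)"
  moreover have "cycle_sum iv w (\<lambda>e. x * a e + y * b e) c = x * cycle_sum iv w a c + y * cycle_sum iv w b c"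
    for c unfolding cycle_sum_def by (simp add: sum.distrib sum_distrib_left algebra_simps)
  ultimately show "(\<lambda>e. x * a e + y * b e) \<in> cone_w H endp iv w" by (simp add: mem_cone_w_iff)
qed

lemma orthant_slice_Int_vanishing_on: "orthant_slice E C \<Longrightarrow> orthant_slice E (C \<inter> vanishing_on T)"
  unfolding orthant_slice_def vanishing_on_def by auto

lemma orthant_slice_face:
  assumes "orthant_slice E C" "face_of_cone E C F"
  shows "orthant_slice E F"
  using assms unfolding orthant_slice_def face_of_cone_def
  by (auto simp: pairing_lin) (auto simp: pairing_def)

lemma face_of_cone_vanishing_on:
  assumes fE: "finite E" and C: "C \<subseteq> QE_nonneg E" and T: "T \<subseteq> E"
  shows "face_of_cone E C (C \<inter> vanishing_on T)"
proof -
  define u where "u = (\<lambda>e. if e \<in> T then (1::rat) else 0)"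
  have pe: "pairing E u t = (\<Sum>e\<in>T. t e)" for t
  proof -
    have "pairing E u t = (\<Sum>e\<in>E. if e \<in> T then t e else 0)"
      unfolding pairing_def u_def by (intro sum.cong) auto
    also have "\<dots> = (\<Sum>e\<in>E \<inter> T. t e)" using fE by (simp add: sum.inter_restrict)
    finally show ?thesis using T by (simp add: Int_absorb1)
  qed
  have nn: "t e \<ge> 0" if "t \<in> C" "e \<in> T" for t e using that C T unfolding QE_nonneg_def by blast
  have "t \<in> vanishing_on T \<longleftrightarrow> pairing E u t = 0" if "t \<in> C" for t
    using sum_nonneg_eq_0_iff[OF finite_subset[OF T fE], of t] nn[OF that]
    unfolding pe vanishing_on_def by blast
  then show ?thesis unfolding face_of_cone_def using nn
    by (intro exI[of _ u]) (auto simp: pe sum_nonneg)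
qed

lemma orthant_slice_positive_point:
  assumes C: "orthant_slice E C" and S: "finite S" "\<forall>e\<in>S. \<exists>t\<in>C. t e \<noteq> 0" "S \<subseteq> E"
  shows "\<exists>t0\<in>C. \<forall>e\<in>S. t0 e > 0"
  using S
proof (induction S rule: finite_induct)
  case empty
  then show ?case using C unfolding orthant_slice_def by blast
next
  case (insert e S)
  then obtain t0 s where t0: "t0 \<in> C" "\<forall>e\<in>S. t0 e > 0" and s: "s \<in> C" "s e \<noteq> 0" by auto
  have nn: "\<forall>t\<in>C. \<forall>e\<in>E. t e \<ge> 0" using C unfolding orthant_slice_def QE_nonneg_def by blast
  have "t0 e' + s e' > 0" if e': "e' \<in> insert e S" for e'
  proof -
    have "e' \<in> E" using e' insert.prems(2) by auto
    then have nn': "0 \<le> t0 e'" "0 \<le> s e'" using nn t0(1) s(1) by auto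
    show ?thesis
    proof (cases "e' = e")
      case True
      then have "0 < s e'" using nn'(2) s(2) by (auto simp: le_less)
      then show ?thesis using nn'(1) by linarith
    next
      case False
      then have "0 < t0 e'" using e' t0(2) by auto
      then show ?thesis using nn'(2) by linarith
    qed
  qed
  then show ?case using orthant_slice_add[OF C t0(1) s(1)] by (intro bexI[of _ "\<lambda>e. t0 e + s e"]) auto
qed

lemma finite_dominating_multiple:
  fixes f g :: "'e \<Rightarrow> 'a::linordered_field"
  assumes "finite S" "\<forall>e\<in>S. g e > 0"
  shows "\<exists>c. \<forall>e\<in>S. f e \<le> c * g e"
proof (intro exI ballI)
  fix e assume e: "e \<in> S"
  then have "g e > 0" using assms by blast
  then have "f e \<le> \<bar>f e\<bar> / g e * g e" by simp
  also have "\<dots> \<le> (\<Sum>e\<in>S. \<bar>f e\<bar> / g e) * g e"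
    using assms e by (intro mult_right_mono member_le_sum) auto
  finally show "f e \<le> (\<Sum>e\<in>S. \<bar>f e\<bar> / g e) * g e" .
qed

lemma face_of_orthant_slice:
  assumes fE: "finite E" and C: "orthant_slice E C" and F: "face_of_cone E C F"
  shows "F = C \<inter> vanishing_on {e\<in>E. \<forall>t\<in>F. t e = 0}"
proof
  define T where "T = {e\<in>E. \<forall>t\<in>F. t e = 0}"
  obtain u where u: "\<forall>t\<in>C. pairing E u t \<ge> 0" and Fu: "F = {t \<in> C. pairing E u t = 0}"
    using F unfolding face_of_cone_def by blast
  show "F \<subseteq> C \<inter> vanishing_on {e\<in>E. \<forall>t\<in>F. t e = 0}" using Fu unfolding vanishing_on_def by blast
  obtain t0 where t0: "t0 \<in> F" "\<forall>e\<in>E - T. t0 e > 0"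
    using orthant_slice_positive_point[OF orthant_slice_face[OF C F], of "E - T"] fE
    unfolding T_def by auto
  show "C \<inter> vanishing_on T \<subseteq> F" unfolding T_def[symmetric]
  proof
    fix t assume t: "t \<in> C \<inter> vanishing_on T"
    obtain c where c: "\<forall>e\<in>E - T. t e \<le> c * t0 e"
      using finite_dominating_multiple[of "E - T" t0 t] fE t0(2) by auto
    \<comment> \<open>c t0 - t lies in C, and its pairing with u is minus that of t.\<close>
    have inC: "t0 \<in> C" "t \<in> C" using t0 Fu t by auto
    then have q: "t0 \<in> QE_nonneg E" "t \<in> QE_nonneg E" using C unfolding orthant_slice_def by auto
    have vT: "\<forall>e\<in>T. t0 e = 0" "\<forall>e\<in>T. t e = 0"
      using t0(1) t unfolding T_def vanishing_on_def by auto
    have "(\<lambda>e. c * t0 e + (-1) * t e) \<in> QE_nonneg E"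
      unfolding QE_nonneg_def QE_def
    proof (intro CollectI conjI allI impI ballI)
      fix e assume "e \<notin> E"
      then show "c * t0 e + (-1) * t e = 0" using q unfolding QE_nonneg_def QE_def by simp
    next
      fix e assume "e \<in> E"
      then show "0 \<le> c * t0 e + (-1) * t e" using c vT by (cases "e \<in> T") auto
    qed
    then have "(\<lambda>e. c * t0 e + (-1) * t e) \<in> C" using C inC unfolding orthant_slice_def by blast
    then have "0 \<le> pairing E u (\<lambda>e. c * t0 e + (-1) * t e)" using u by blast
    then have "0 \<le> c * pairing E u t0 - pairing E u t" using pairing_lin[of E u c t0 "-1" t] by simp
    moreover have "pairing E u t0 = 0" using t0(1) Fu by blast
    moreover have "0 \<le> pairing E u t" using u inC by blast
    ultimately show "t \<in> F" using Fu inC by simp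
  qed
qed

section \<open>The fan of the cones c_w\<close>

lemma cone_w_vanishing_on_eq:
  assumes "\<forall>h\<in>H. iv h \<noteq> h \<longrightarrow> w h = w' h \<or> {h, iv h} \<in> T"
  shows "cone_w H endp iv w \<inter> vanishing_on T = cone_w H endp iv w' \<inter> vanishing_on T"
proof -
  have "cycle_sum iv w t c = cycle_sum iv w' t c"
    if "t \<in> vanishing_on T" "is_cycle H endp iv c" for t c
    unfolding cycle_sum_def
  proof (rule sum.cong[OF refl])
    fix j assume "j \<in> {..<length c}"
    then have "c ! j \<in> H" "iv (c ! j) \<noteq> c ! j" using that(2) unfolding is_cycle_def by auto
    then have "w (c ! j) = w' (c ! j) \<or> {c ! j, iv (c ! j)} \<in> T" using assms by blast
    then show "of_int (w (c ! j)) * t {c ! j, iv (c ! j)} = of_int (w' (c ! j)) * t {c ! j, iv (c ! j)}"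
      using that(1) unfolding vanishing_on_def by auto
  qed
  then show ?thesis by (auto simp: mem_cone_w_iff)
qed

definition disagreement_edges :: "'h set \<Rightarrow> ('h \<Rightarrow> 'h) \<Rightarrow> ('h \<Rightarrow> int) \<Rightarrow> ('h \<Rightarrow> int) \<Rightarrow> 'h set set" where
  "disagreement_edges H iv w w' = {{h, iv h} | h. h \<in> H \<and> iv h \<noteq> h \<and> w h \<noteq> w' h}"

lemma disagreement_edges_subset: "disagreement_edges H iv w w' \<subseteq> edges H iv"
  unfolding disagreement_edges_def edges_def by blast

lemma cone_w_Int_cone_w:
  assumes g: "is_graph V H endp iv"
    and w: "w \<in> weightings V H endp iv gen k lw" and w': "w' \<in> weightings V H endp iv gen k lw"
  shows "cone_w H endp iv w \<inter> cone_w H endp iv w'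
       = cone_w H endp iv w \<inter> vanishing_on (disagreement_edges H iv w w')"
proof
  have "\<forall>h\<in>H. iv h \<noteq> h \<longrightarrow> w h = w' h \<or> {h, iv h} \<in> disagreement_edges H iv w w'"
    unfolding disagreement_edges_def by blast
  from cone_w_vanishing_on_eq[OF this]
  show "cone_w H endp iv w \<inter> vanishing_on (disagreement_edges H iv w w') \<subseteq>
      cone_w H endp iv w \<inter> cone_w H endp iv w'" by blast
  show "cone_w H endp iv w \<inter> cone_w H endp iv w' \<subseteq>
      cone_w H endp iv w \<inter> vanishing_on (disagreement_edges H iv w w')"
  proof (clarsimp simp: vanishing_on_def disagreement_edges_def)
    fix t h assume t: "t \<in> cone_w H endp iv w" "t \<in> cone_w H endp iv w'"
      and h: "h \<in> H" "iv h \<noteq> h" "w h \<noteq> w' h"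
    have "0 \<le> t {h, iv h}" using t(1) edge_in_edges[of h H iv] h
      unfolding mem_cone_w_iff QE_nonneg_def by blast
    moreover have "\<not> 0 < t {h, iv h}" using weightings_agree_on_support[OF g w w' t h(1,2)] h(3) by blast
    ultimately show "t {h, iv h} = 0" by simp
  qed
qed

lemma finite_cycles:
  assumes "is_graph V H endp iv"
  shows "finite {c. is_cycle H endp iv c}"
proof -
  have fH: "finite H" using assms unfolding is_graph_def by blast
  have "{c. is_cycle H endp iv c} \<subseteq> {xs. set xs \<subseteq> H \<and> length xs \<le> card H}"
  proof clarify
    fix c assume "is_cycle H endp iv c"
    then have c: "set c \<subseteq> H" "distinct c" unfolding is_cycle_def by (auto simp: distinct_map)
    then show "set c \<subseteq> H \<and> length c \<le> card H"
      using card_mono[OF fH c(1)] by (simp add: distinct_card)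
  qed
  then show ?thesis using finite_lists_length_le[OF fH] finite_subset by blast
qed

lemma pairing_delta:
  assumes "finite E" "e0 \<in> E"
  shows "pairing E (\<lambda>e. if e = e0 then 1 else 0) t = t e0"
proof -
  have "pairing E (\<lambda>e. if e = e0 then 1 else 0) t = (\<Sum>e\<in>E. if e = e0 then t e else 0)"
    unfolding pairing_def by (intro sum.cong) auto
  then show ?thesis using assms by simp
qed

lemma pairing_uminus: "pairing E (\<lambda>e. - u e) t = - pairing E u t"
  unfolding pairing_def by (simp add: sum_negf)

lemma polyhedral_cone_nonneg_eqs:
  assumes fE: "finite E" and fA: "finite A"
  shows "polyhedral_cone E {t \<in> QE_nonneg E. \<forall>u\<in>A. pairing E u t = 0}"
proof -
  define U where "U = (\<lambda>e0 e. if e = e0 then 1 else 0) ` E \<union> A \<union> (\<lambda>u e. - u e) ` A"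
  have "(\<forall>u\<in>U. pairing E u t \<ge> 0) \<longleftrightarrow> (\<forall>e\<in>E. t e \<ge> 0) \<and> (\<forall>u\<in>A. pairing E u t = 0)" for t
  proof
    assume all: "\<forall>u\<in>U. pairing E u t \<ge> 0"
    have "t e \<ge> 0" if "e \<in> E" for e
      using all[rule_format, of "\<lambda>e'. if e' = e then 1 else 0"] pairing_delta[OF fE that]
      unfolding U_def using that by auto
    moreover have "pairing E u t = 0" if "u \<in> A" for u
      using all[rule_format, of u] all[rule_format, of "\<lambda>e. - u e"] pairing_uminus[of E u t]
      unfolding U_def using that by auto
    ultimately show "(\<forall>e\<in>E. t e \<ge> 0) \<and> (\<forall>u\<in>A. pairing E u t = 0)" by blast
  qed (use fE in \<open>auto simp: U_def pairing_delta pairing_uminus\<close>)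
  then have "{t \<in> QE_nonneg E. \<forall>u\<in>A. pairing E u t = 0} = {t \<in> QE E. \<forall>u\<in>U. pairing E u t \<ge> 0}"
    unfolding QE_nonneg_def by blast
  moreover have "finite U" unfolding U_def using fE fA by blast
  ultimately show ?thesis unfolding polyhedral_cone_def by blast
qed

definition cycle_vector :: "('h \<Rightarrow> 'h) \<Rightarrow> ('h \<Rightarrow> int) \<Rightarrow> 'h list \<Rightarrow> 'h set \<Rightarrow> rat" where
  "cycle_vector iv w c e = (\<Sum>j<length c. if {c ! j, iv (c ! j)} = e then of_int (w (c ! j)) else 0)"

lemma pairing_cycle_vector:
  assumes fE: "finite E" and cE: "\<forall>j<length c. {c ! j, iv (c ! j)} \<in> E"
  shows "pairing E (cycle_vector iv w c) t = cycle_sum iv w t c"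
proof -
  have "pairing E (cycle_vector iv w c) t
      = (\<Sum>j<length c. \<Sum>e\<in>E. if {c ! j, iv (c ! j)} = e then of_int (w (c ! j)) * t e else 0)"
    unfolding pairing_def cycle_vector_def sum_distrib_right
    by (subst sum.swap) (intro sum.cong refl; simp)
  also have "\<dots> = cycle_sum iv w t c"
    unfolding cycle_sum_def using fE cE by (intro sum.cong refl) (simp add: sum.delta)
  finally show ?thesis .
qed

lemma polyhedral_cone_w_Int_vanishing_on:
  assumes g: "is_graph V H endp iv" and T: "T \<subseteq> edges H iv"
  shows "polyhedral_cone (edges H iv) (cone_w H endp iv w \<inter> vanishing_on T)"
proof -
  define E where "E = edges H iv"
  define A where "A = cycle_vector iv w ` {c. is_cycle H endp iv c} \<union> (\<lambda>e0 e. if e = e0 then 1 else 0) ` T"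
  have fE: "finite E" unfolding E_def using finite_edges[OF g] .
  have cE: "\<forall>j<length c. {c ! j, iv (c ! j)} \<in> E" if "is_cycle H endp iv c" for c
  proof (intro allI impI)
    fix j assume "j < length c"
    then have "c ! j \<in> set c" by simp
    then show "{c ! j, iv (c ! j)} \<in> E"
      using that edge_in_edges[of "c ! j" H iv] unfolding E_def is_cycle_def by blast
  qed
  have iff: "(\<forall>u\<in>A. pairing E u t = 0) \<longleftrightarrow>
      (\<forall>c. is_cycle H endp iv c \<longrightarrow> cycle_sum iv w t c = 0) \<and> t \<in> vanishing_on T" for t
  proof
    assume all: "\<forall>u\<in>A. pairing E u t = 0"
    have "cycle_sum iv w t c = 0" if "is_cycle H endp iv c" for c
    proof -
      have "cycle_vector iv w c \<in> A" unfolding A_def using that by blast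
      then have "pairing E (cycle_vector iv w c) t = 0" using all by blast
      then show ?thesis using pairing_cycle_vector[OF fE cE[OF that], of w t] by simp
    qed
    moreover have "t e = 0" if "e \<in> T" for e
      using all[rule_format, of "\<lambda>e'. if e' = e then 1 else 0"] pairing_delta[OF fE, of e t] that T
      unfolding A_def E_def by auto
    ultimately show "(\<forall>c. is_cycle H endp iv c \<longrightarrow> cycle_sum iv w t c = 0) \<and> t \<in> vanishing_on T"
      unfolding vanishing_on_def by blast
  next
    assume "(\<forall>c. is_cycle H endp iv c \<longrightarrow> cycle_sum iv w t c = 0) \<and> t \<in> vanishing_on T"
    then show "\<forall>u\<in>A. pairing E u t = 0"
      unfolding A_def vanishing_on_def using pairing_cycle_vector[OF fE cE] pairing_delta[OF fE] T
      unfolding E_def by auto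
  qed
  have "cone_w H endp iv w \<inter> vanishing_on T = {t \<in> QE_nonneg E. \<forall>u\<in>A. pairing E u t = 0}"
  proof (rule set_eqI)
    fix t
    show "t \<in> cone_w H endp iv w \<inter> vanishing_on T \<longleftrightarrow> t \<in> {t \<in> QE_nonneg E. \<forall>u\<in>A. pairing E u t = 0}"
      using iff[of t] by (auto simp: mem_cone_w_iff E_def)
  qed
  moreover have "finite A" unfolding A_def
    using finite_cycles[OF g] finite_subset[OF T finite_edges[OF g]] by blast
  ultimately show ?thesis using polyhedral_cone_nonneg_eqs[OF fE] unfolding E_def by simp
qed

lemma faces_of_cone_w:
  assumes "is_graph V H endp iv"
  shows "face_of_cone (edges H iv) (cone_w H endp iv w) F \<longleftrightarrow>
           (\<exists>T\<subseteq>edges H iv. F = cone_w H endp iv w \<inter> vanishing_on T)"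
proof
  assume F: "face_of_cone (edges H iv) (cone_w H endp iv w) F"
  show "\<exists>T\<subseteq>edges H iv. F = cone_w H endp iv w \<inter> vanishing_on T"
    using face_of_orthant_slice[OF finite_edges[OF assms] orthant_slice_cone_w F]
    by (intro exI[of _ "{e\<in>edges H iv. \<forall>t\<in>F. t e = 0}"]) auto
next
  assume "\<exists>T\<subseteq>edges H iv. F = cone_w H endp iv w \<inter> vanishing_on T"
  then obtain T where "T \<subseteq> edges H iv" "F = cone_w H endp iv w \<inter> vanishing_on T" by blast
  moreover have "cone_w H endp iv w \<subseteq> QE_nonneg (edges H iv)" by (auto simp: mem_cone_w_iff)
  ultimately show "face_of_cone (edges H iv) (cone_w H endp iv w) F"
    using face_of_cone_vanishing_on[OF finite_edges[OF assms]] by blast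
qed

definition fan_cones :: "'v set \<Rightarrow> 'h set \<Rightarrow> ('h \<Rightarrow> 'v) \<Rightarrow> ('h \<Rightarrow> 'h) \<Rightarrow> ('v \<Rightarrow> nat)
     \<Rightarrow> int \<Rightarrow> ('h \<Rightarrow> int) \<Rightarrow> ('h set \<Rightarrow> rat) set set" where
  "fan_cones V H endp iv gen k lw =
     {cone_w H endp iv w \<inter> vanishing_on T | w T. w \<in> weightings V H endp iv gen k lw \<and> T \<subseteq> edges H iv}"

lemma faces_of_cones_w_eq_fan_cones:
  assumes "is_graph V H endp iv"
  shows "{F. \<exists>w\<in>weightings V H endp iv gen k lw. face_of_cone (edges H iv) (cone_w H endp iv w) F}
       = fan_cones V H endp iv gen k lw"
  unfolding fan_cones_def faces_of_cone_w[OF assms] by blast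

lemma face_of_cone_w_with_bounded_weights:
  assumes g: "is_graph V H endp iv" and w: "w \<in> weightings V H endp iv gen k lw"
    and Fw: "face_of_cone (edges H iv) (cone_w H endp iv w) F"
  obtains T f where "T \<subseteq> edges H iv" "F = cone_w H endp iv f \<inter> vanishing_on T"
    "\<forall>x. (x \<in> H \<longrightarrow> f x \<in> {- weight_bound V H endp iv gen k lw..weight_bound V H endp iv gen k lw})
       \<and> (x \<notin> H \<longrightarrow> f x = 0)"
proof -
  define B where "B = weight_bound V H endp iv gen k lw"
  define T where "T = {e\<in>edges H iv. \<forall>t\<in>F. t e = 0}"
  have FT: "F = cone_w H endp iv w \<inter> vanishing_on T"
    unfolding T_def by (rule face_of_orthant_slice[OF finite_edges[OF g] orthant_slice_cone_w Fw])
  obtain t0 where t0: "t0 \<in> F" "\<forall>e\<in>edges H iv - T. t0 e > 0"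
    using orthant_slice_positive_point[OF orthant_slice_face[OF orthant_slice_cone_w Fw],
        of "edges H iv - T"] finite_edges[OF g] unfolding T_def by auto
  \<comment> \<open>Outside T the weighting is bounded (t0 is positive there); on T it is irrelevant.\<close>
  define f where "f = (\<lambda>h. if h \<in> H \<and> iv h \<noteq> h \<and> {h, iv h} \<notin> T then w h else 0)"
  have "\<bar>w x\<bar> \<le> B" if "x \<in> H" "iv x \<noteq> x" "{x, iv x} \<notin> T" for x
    using weighting_bounded_on_support[OF g w _ that(1,2), of t0] t0 FT edge_in_edges[of x H iv] that
    unfolding B_def by blast
  then have "\<forall>x. (x \<in> H \<longrightarrow> f x \<in> {-B..B}) \<and> (x \<notin> H \<longrightarrow> f x = 0)" unfolding f_def
    using weight_bound_nonneg[of V H endp iv gen k lw] unfolding B_def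
    by (auto simp: abs_le_iff minus_le_iff)
  moreover have "F = cone_w H endp iv f \<inter> vanishing_on T"
    using FT cone_w_vanishing_on_eq[of H iv w f T endp] unfolding f_def by auto
  moreover have "T \<subseteq> edges H iv" unfolding T_def by blast
  ultimately show ?thesis using that unfolding B_def by blast
qed

lemma finite_fan_cones:
  fixes H :: "'h set"
  assumes g: "is_graph V H endp iv"
  shows "finite (fan_cones V H endp iv gen k lw)"
proof -
  define B where "B = weight_bound V H endp iv gen k lw"
  define Phi where "Phi = {f::'h \<Rightarrow> int. \<forall>x. (x \<in> H \<longrightarrow> f x \<in> {-B..B}) \<and> (x \<notin> H \<longrightarrow> f x = 0)}"
  have "finite Phi" unfolding Phi_def
    by (rule finite_set_of_finite_funs) (use g in \<open>simp_all add: is_graph_def\<close>)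
  then have fin: "finite (Pow (edges H iv) \<times> Phi)" using finite_edges[OF g] by simp
  have "fan_cones V H endp iv gen k lw
      \<subseteq> (\<lambda>(T, f). cone_w H endp iv f \<inter> vanishing_on T) ` (Pow (edges H iv) \<times> Phi)"
    unfolding faces_of_cones_w_eq_fan_cones[OF g, symmetric]
  proof clarify
    fix F w assume "w \<in> weightings V H endp iv gen k lw"
      and "face_of_cone (edges H iv) (cone_w H endp iv w) F"
    then obtain T f where "T \<subseteq> edges H iv" "F = cone_w H endp iv f \<inter> vanishing_on T"
      "\<forall>x. (x \<in> H \<longrightarrow> f x \<in> {-B..B}) \<and> (x \<notin> H \<longrightarrow> f x = 0)"
      unfolding B_def by (rule face_of_cone_w_with_bounded_weights[OF g])
    then show "F \<in> (\<lambda>(T, f). cone_w H endp iv f \<inter> vanishing_on T) ` (Pow (edges H iv) \<times> Phi)"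
      unfolding Phi_def by (intro image_eqI[where x="(T, f)"]) simp_all
  qed
  then show ?thesis by (rule finite_subset[OF _ finite_imageI[OF fin]])
qed

lemma fan_cones_polyhedral:
  assumes "is_graph V H endp iv" and "C \<in> fan_cones V H endp iv gen k lw"
  shows "polyhedral_cone (edges H iv) C \<and> C \<subseteq> QE_nonneg (edges H iv)"
  using assms(2) polyhedral_cone_w_Int_vanishing_on[OF assms(1)] unfolding fan_cones_def
  by (auto simp: mem_cone_w_iff)

lemma fan_cones_closed_under_faces:
  assumes g: "is_graph V H endp iv" and C: "C \<in> fan_cones V H endp iv gen k lw"
    and F: "face_of_cone (edges H iv) C F"
  shows "F \<in> fan_cones V H endp iv gen k lw"
proof -
  obtain w T where wT: "w \<in> weightings V H endp iv gen k lw" "T \<subseteq> edges H iv"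
    "C = cone_w H endp iv w \<inter> vanishing_on T"
    using C unfolding fan_cones_def by blast
  let ?T0 = "{e\<in>edges H iv. \<forall>t\<in>F. t e = 0}"
  have "orthant_slice (edges H iv) C"
    using orthant_slice_Int_vanishing_on[OF orthant_slice_cone_w] wT(3) by simp
  then have "F = C \<inter> vanishing_on ?T0" using face_of_orthant_slice[OF finite_edges[OF g] _ F] by blast
  then have "F = cone_w H endp iv w \<inter> vanishing_on (T \<union> ?T0)"
    using wT(3) unfolding vanishing_on_def by blast
  moreover have "T \<union> ?T0 \<subseteq> edges H iv" using wT(2) by blast
  ultimately show ?thesis using wT(1) unfolding fan_cones_def by blast
qed

lemma face_of_fan_cones_Int:
  assumes g: "is_graph V H endp iv"
    and C1: "C1 \<in> fan_cones V H endp iv gen k lw" and C2: "C2 \<in> fan_cones V H endp iv gen k lw"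
  shows "face_of_cone (edges H iv) C1 (C1 \<inter> C2)"
proof -
  obtain w1 T1 w2 T2 where w: "w1 \<in> weightings V H endp iv gen k lw" "w2 \<in> weightings V H endp iv gen k lw"
    and T: "T1 \<subseteq> edges H iv" "T2 \<subseteq> edges H iv"
    and C: "C1 = cone_w H endp iv w1 \<inter> vanishing_on T1" "C2 = cone_w H endp iv w2 \<inter> vanishing_on T2"
    using C1 C2 unfolding fan_cones_def by blast
  have eq: "C1 \<inter> C2 = C1 \<inter> vanishing_on (disagreement_edges H iv w1 w2 \<union> T2)"
    using cone_w_Int_cone_w[OF g w] C unfolding vanishing_on_def by blast
  have "C1 \<subseteq> QE_nonneg (edges H iv)" using C by (auto simp: mem_cone_w_iff)
  moreover have "disagreement_edges H iv w1 w2 \<union> T2 \<subseteq> edges H iv"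
    using disagreement_edges_subset T by blast
  ultimately show ?thesis unfolding eq by (rule face_of_cone_vanishing_on[OF finite_edges[OF g]])
qed

theorem corollary3p11:
  fixes V :: "'v set" and H :: "'h set" and endp :: "'h \<Rightarrow> 'v" and iv :: "'h \<Rightarrow> 'h"
    and gen :: "'v \<Rightarrow> nat" and k :: int and lw :: "'h \<Rightarrow> int"
  assumes "is_graph V H endp iv"
    and "connected_graph V H endp iv"
    and "(\<Sum>h\<in>{h\<in>H. iv h = h}. lw h) = - k * (2 * graph_genus V H iv gen - 2)"
  shows "finite_fan (edges H iv)
           {F. \<exists>w\<in>weightings V H endp iv gen k lw. face_of_cone (edges H iv) (cone_w H endp iv w) F}"
proof -
  \<comment> \<open>Connectedness and the leg sum only make W(Gamma) nonempty; the fan property does not need that.\<close>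
  note g = assms(1)
  note fan_eq = faces_of_cones_w_eq_fan_cones[OF g, where gen = gen and k = k and lw = lw]
  let ?fan = "fan_cones V H endp iv gen k lw"
  show ?thesis
    unfolding finite_fan_def fan_eq
  proof (intro conjI ballI allI impI)
    show "finite ?fan" by (rule finite_fan_cones[OF g])
  next
    fix C assume "C \<in> ?fan"
    then show "polyhedral_cone (edges H iv) C" "C \<subseteq> QE_nonneg (edges H iv)"
      using fan_cones_polyhedral[OF g] by blast+
  next
    fix C F assume "C \<in> ?fan" "face_of_cone (edges H iv) C F"
    then show "F \<in> ?fan" by (rule fan_cones_closed_under_faces[OF g])
  next
    fix C1 C2 assume C: "C1 \<in> ?fan" "C2 \<in> ?fan"
    show "face_of_cone (edges H iv) C1 (C1 \<inter> C2)" by (rule face_of_fan_cones_Int[OF g C])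
    show "face_of_cone (edges H iv) C2 (C1 \<inter> C2)"
      using face_of_fan_cones_Int[OF g C(2,1)] by (simp add: Int_commute)
  qed
qed

end
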